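(* Let $B=2\pi/\sqrt{6}$, $F(\alpha)=\dfrac{1+e^{-\alpha}}{1+e^{-\alpha}+e^{-2\alpha}}$, and for integers $n,\ell\ge 0$ let $Q_1(n,\ell)=2n(3n+1)+3n\ell$ and $Q_2(n,\ell)=Q_1(n,\ell)+8n+4+2\ell$. Define $$I_M(\ell,N)=\sum_{n\ge 0}\left(e^{-\frac{BQ_1(n,\ell)}{2\sqrt{N}}}-e^{-\frac{BQ_2(n,\ell)}{2\sqrt{N}}}\right).$$ Then, uniformly for integers $0\le\ell\le\sqrt{N}(\log N)^2$, as $N\to\infty$, $$I_M(\ell,N)=\left(1+O\left(N^{-1/10}\right)\right)F\left(\frac{B\ell}{2\sqrt{N}}\right).$$ *)

theory Defs
  imports Complex_Main
begin

definition B_const :: real where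
  "B_const = 2 * pi / sqrt 6"

definition F_fun :: "real \<Rightarrow> real" where
  "F_fun \<alpha> = (1 + exp (- \<alpha>)) / (1 + exp (- \<alpha>) + exp (- 2 * \<alpha>))"

definition Q1 :: "nat \<Rightarrow> nat \<Rightarrow> nat" where
  "Q1 n l = 2 * n * (3 * n + 1) + 3 * n * l"

definition Q2 :: "nat \<Rightarrow> nat \<Rightarrow> nat" where
  "Q2 n l = Q1 n l + 8 * n + 4 + 2 * l"

definition I_M :: "nat \<Rightarrow> nat \<Rightarrow> real" where
  "I_M l N = (\<Sum>n. exp (- B_const * real (Q1 n l) / (2 * sqrt (real N)))
                    - exp (- B_const * real (Q2 n l) / (2 * sqrt (real N))))"

end

theory Submission
  imports Defs
begin

(* Write t = B / (2 sqrt N), x = exp (-t l) and z_n = exp (-t (4n + 8/3 + l)). Then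
   exp (-t Q1(n+1)) = exp (-t Q1(n)) z_n^3 and exp (-t Q2(n)) = exp (-t Q1(n)) exp (4t/3) z_n^2,
   while F(alpha) = F_rat (exp (-alpha)) with F_rat z = (1 + z)/(1 + z + z^2) = (1 - z^2)/(1 - z^3).
   Hence the n-th summand of I_M equals F_rat x times the telescoping difference
   exp (-t Q1(n)) - exp (-t Q1(n+1)), up to an error controlled by |z_n - x| <= t (4n + 3) and
   exp (4t/3) - 1 <= 3t. The differences sum to 1, and summation by parts bounds the total error by
   O(t sum_n exp (-t Q1(n))) = O(t / sqrt t) = O(N^(-1/4)). As F_rat >= 1/2 on [0, 1], this absolute
   error is also a relative one. The estimate is uniform in l. *)

definition F_rat :: "real \<Rightarrow> real" where
  "F_rat x = (1 + x) / (1 + x + x^2)"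

lemma F_fun_eq_F_rat: "F_fun \<alpha> = F_rat (exp (- \<alpha>))"
proof -
  have "exp (- 2 * \<alpha>) = exp (- \<alpha>)^2"
    by (simp add: power2_eq_square exp_add[symmetric])
  then show ?thesis unfolding F_fun_def F_rat_def by simp
qed

lemma one_plus_self_plus_square_pos: "0 < 1 + z + z^2" for z :: real
proof -
  have "1 + z + z^2 = (z + 1/2)^2 + 3/4" by (simp add: power2_eq_square algebra_simps)
  then show ?thesis using zero_le_power2[of "z + 1/2"] by linarith
qed

lemma one_minus_cube_mult_F_rat: "(1 - z^3) * F_rat z = 1 - z^2"
proof -
  have "1 - z^3 = (1 - z) * (1 + z + z^2)"
    by (simp add: algebra_simps power2_eq_square power3_eq_cube)
  then have "(1 - z^3) * F_rat z = (1 - z) * (1 + z)"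
    using one_plus_self_plus_square_pos[of z] by (simp add: F_rat_def)
  then show ?thesis by (simp add: algebra_simps power2_eq_square)
qed

lemma F_rat_lipschitz:
  assumes "0 \<le> x" "x \<le> 1" "0 \<le> z" "z \<le> 1"
  shows "\<bar>F_rat z - F_rat x\<bar> \<le> 3 * \<bar>z - x\<bar>"
proof -
  define D where "D = (1 + z + z^2) * (1 + x + x^2)"
  have D: "1 \<le> D" unfolding D_def using assms mult_mono[of 1 "1 + z + z^2" 1 "1 + x + x^2"] by simp
  have diff: "F_rat z - F_rat x = (x - z) * (x + z + x * z) / D"
    using one_plus_self_plus_square_pos[of x] one_plus_self_plus_square_pos[of z]
    unfolding F_rat_def D_def by (simp add: field_simps power2_eq_square)
  have "x * z \<le> 1" using assms by (simp add: mult_le_one)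
  then have num: "\<bar>x + z + x * z\<bar> \<le> 3" using assms by simp
  have "\<bar>F_rat z - F_rat x\<bar> = \<bar>x - z\<bar> * \<bar>x + z + x * z\<bar> / D"
    unfolding diff using D by (simp add: abs_mult)
  also have "\<dots> \<le> \<bar>x - z\<bar> * \<bar>x + z + x * z\<bar> / 1"
    using D by (intro divide_left_mono) auto
  also have "\<dots> \<le> \<bar>x - z\<bar> * 3" using num by (simp add: mult_left_mono)
  finally show ?thesis by (simp add: abs_minus_commute)
qed

lemma F_rat_ge_half:
  assumes "0 \<le> x" "x \<le> 1"
  shows "1/2 \<le> F_rat x"
proof -
  have "x^2 \<le> x" using assms by (simp add: power2_eq_square mult_right_le_one_le)
  then show ?thesis
    using assms one_plus_self_plus_square_pos[of x] by (simp add: F_rat_def field_simps)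
qed

lemma F_rat_approx:
  assumes x: "0 \<le> x" "x \<le> 1" and z: "0 \<le> z" "z \<le> 1"
    and zx: "\<bar>z - x\<bar> \<le> \<delta>" and c: "1 \<le> c" "c \<le> 1 + \<epsilon>"
  shows "\<bar>1 - c * z^2 - F_rat x * (1 - z^3)\<bar> \<le> 3 * \<delta> * (1 - z^3) + \<epsilon>"
proof -
  have z23: "0 \<le> 1 - z^3" "z^2 \<le> 1" using z by (auto simp: power_le_one)
  have "1 - c * z^2 - F_rat x * (1 - z^3) = (1 - z^3) * (F_rat z - F_rat x) - z^2 * (c - 1)"
    using one_minus_cube_mult_F_rat[of z] by (simp add: algebra_simps)
  also have "\<bar>\<dots>\<bar> \<le> (1 - z^3) * \<bar>F_rat z - F_rat x\<bar> + z^2 * (c - 1)"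
    using abs_triangle_ineq4[of "(1 - z^3) * (F_rat z - F_rat x)" "z^2 * (c - 1)"] z23 c
    by (simp add: abs_mult)
  also have "\<dots> \<le> (1 - z^3) * (3 * \<delta>) + 1 * \<epsilon>"
    using F_rat_lipschitz[OF x z] zx z23 c by (intro add_mono mult_mono) auto
  finally show ?thesis by (simp add: algebra_simps)
qed

lemma Q1_Suc: "real (Q1 (Suc n) l) = real (Q1 n l) + 3 * (4 * real n + 8/3 + real l)"
  unfolding Q1_def by (simp add: algebra_simps)

lemma Q2_eq_Q1: "real (Q2 n l) = real (Q1 n l) + 2 * (4 * real n + 8/3 + real l) - 4/3"
  unfolding Q2_def by simp

lemma Q1_ge: "6 * real n ^ 2 \<le> real (Q1 n l)"
  unfolding Q1_def by (simp add: power2_eq_square algebra_simps)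

definition expQ1 :: "real \<Rightarrow> nat \<Rightarrow> nat \<Rightarrow> real" where
  "expQ1 t l n = exp (- t * real (Q1 n l))"

definition expQ2 :: "real \<Rightarrow> nat \<Rightarrow> nat \<Rightarrow> real" where
  "expQ2 t l n = exp (- t * real (Q2 n l))"

definition step_ratio :: "real \<Rightarrow> nat \<Rightarrow> nat \<Rightarrow> real" where
  "step_ratio t l n = exp (- t * (4 * real n + 8/3 + real l))"

lemma expQ1_Suc: "expQ1 t l (Suc n) = expQ1 t l n * step_ratio t l n ^ 3"
  unfolding expQ1_def step_ratio_def Q1_Suc exp_of_nat_mult[symmetric]
  by (simp add: algebra_simps exp_add[symmetric])

lemma expQ2_eq: "expQ2 t l n = expQ1 t l n * (exp (4 * t / 3) * step_ratio t l n ^ 2)"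
  unfolding expQ1_def expQ2_def step_ratio_def Q2_eq_Q1 exp_of_nat_mult[symmetric]
  by (simp add: algebra_simps exp_add[symmetric])

lemma step_ratio_close:
  assumes "0 \<le> t"
  shows "\<bar>step_ratio t l n - exp (- t * real l)\<bar> \<le> t * (4 * real n + 3)"
proof -
  define y where "y = t * (4 * real n + 8/3)"
  have y: "0 \<le> y" "y \<le> t * (4 * real n + 3)" using assms by (auto simp: y_def intro: mult_left_mono)
  have "step_ratio t l n = exp (- t * real l) * exp (- y)"
    unfolding step_ratio_def y_def by (simp add: algebra_simps exp_add[symmetric])
  then have "\<bar>step_ratio t l n - exp (- t * real l)\<bar> = exp (- t * real l) * (1 - exp (- y))"
    using y by (simp add: algebra_simps abs_mult_pos)
  also have "\<dots> \<le> 1 * y"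
    using assms y exp_ge_add_one_self[of "- y"] by (intro mult_mono) auto
  finally show ?thesis using y by simp
qed

lemma expQ_diff_approx:
  assumes "0 \<le> t" "t \<le> 3/8"
  shows "\<bar>expQ1 t l n - expQ2 t l n - F_rat (exp (- t * real l)) * (expQ1 t l n - expQ1 t l (Suc n))\<bar>
    \<le> 3 * t * (4 * real n + 3) * (expQ1 t l n - expQ1 t l (Suc n)) + 3 * t * expQ1 t l n"
proof -
  define g where "g = expQ1 t l n"
  define z where "z = step_ratio t l n"
  define c where "c = exp (4 * t / 3)"
  have g: "0 \<le> g" by (simp add: g_def expQ1_def)
  have z: "0 \<le> z" "z \<le> 1" using assms by (auto simp: z_def step_ratio_def)
  have c: "1 \<le> c" "c \<le> 1 + 3 * t"
    using assms real_exp_bound_lemma[of "4 * t / 3"] by (auto simp: c_def)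
  have "expQ1 t l n - expQ2 t l n - F_rat (exp (- t * real l)) * (expQ1 t l n - expQ1 t l (Suc n))
      = g * (1 - c * z^2 - F_rat (exp (- t * real l)) * (1 - z^3))"
    unfolding expQ1_Suc expQ2_eq g_def[symmetric] z_def[symmetric] c_def[symmetric]
    by (simp add: algebra_simps)
  also have "\<bar>\<dots>\<bar> = g * \<bar>1 - c * z^2 - F_rat (exp (- t * real l)) * (1 - z^3)\<bar>"
    using g by (simp add: abs_mult)
  also have "\<dots> \<le> g * (3 * (t * (4 * real n + 3)) * (1 - z^3) + 3 * t)"
    using assms z c step_ratio_close[OF assms(1), of l n]
    by (intro mult_left_mono F_rat_approx g) (auto simp: z_def)
  also have "\<dots> = 3 * t * (4 * real n + 3) * (expQ1 t l n - expQ1 t l (Suc n)) + 3 * t * expQ1 t l n"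
    unfolding expQ1_Suc g_def[symmetric] z_def[symmetric] by (simp add: algebra_simps)
  finally show ?thesis .
qed

lemma expQ1_le_geometric:
  assumes "0 \<le> t"
  shows "expQ1 t l n \<le> exp 6 * exp (- 12 * sqrt t) ^ n"
proof -
  have "- t * real (Q1 n l) \<le> - t * (6 * real n ^ 2)" using assms Q1_ge[of n l] by (simp add: mult_left_mono)
  also have "\<dots> \<le> 6 - 12 * sqrt t * real n"
  proof -
    have "0 \<le> 6 * (sqrt t * real n - 1)^2" by simp
    then show ?thesis using assms by (simp add: power2_eq_square algebra_simps)
  qed
  finally have "expQ1 t l n \<le> exp (6 - 12 * sqrt t * real n)" unfolding expQ1_def by simp
  also have "\<dots> = exp 6 * exp (- 12 * sqrt t) ^ n"
    by (simp add: exp_diff exp_minus exp_of_nat_mult[symmetric] field_simps)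
  finally show ?thesis .
qed

lemma summable_expQ1:
  assumes "0 < t"
  shows "summable (expQ1 t l)"
proof (rule summable_comparison_test)
  show "summable (\<lambda>n. exp 6 * exp (- 12 * sqrt t) ^ n)"
    using assms by (intro summable_mult summable_geometric) simp
  show "\<exists>N. \<forall>n\<ge>N. norm (expQ1 t l n) \<le> exp 6 * exp (- 12 * sqrt t) ^ n"
    using assms expQ1_le_geometric by (auto simp: expQ1_def)
qed

lemma one_minus_exp_neg_ge:
  fixes y :: real
  assumes "0 \<le> y" "y \<le> 1"
  shows "y / 2 \<le> 1 - exp (- y)"
proof -
  have "exp (- y) * (1 + y) \<le> exp (- y) * exp y" by (intro mult_left_mono) auto
  then have "exp (- y) \<le> 1 / (1 + y)" using assms by (simp add: exp_minus field_simps)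
  also have "\<dots> \<le> 1 - y / 2"
    using assms mult_left_le[of y y] by (simp add: field_simps algebra_simps power2_eq_square)
  finally show ?thesis by simp
qed

lemma sum_expQ1_le:
  assumes "0 < t" "t \<le> 1/144"
  shows "(\<Sum>n<M. expQ1 t l n) \<le> exp 6 / (6 * sqrt t)"
proof -
  define q where "q = exp (- 12 * sqrt t)"
  have q: "0 < q" "q < 1" using assms by (auto simp: q_def)
  have "sqrt t \<le> sqrt (1/144)" using assms by simp
  then have "12 * sqrt t \<le> 1" by (simp add: real_sqrt_divide)
  then have q6: "6 * sqrt t \<le> 1 - q"
    using one_minus_exp_neg_ge[of "12 * sqrt t"] assms by (simp add: q_def)
  have "(\<Sum>n<M. expQ1 t l n) \<le> exp 6 * (\<Sum>n<M. q ^ n)"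
    unfolding sum_distrib_left q_def using assms by (intro sum_mono expQ1_le_geometric) auto
  also have "(\<Sum>n<M. q ^ n) \<le> (\<Sum>n. q ^ n)"
    using q by (intro sum_le_suminf summable_geometric) auto
  also have "\<dots> = 1 / (1 - q)" using q by (simp add: suminf_geometric)
  also have "\<dots> \<le> 1 / (6 * sqrt t)" using assms q q6 by (intro divide_left_mono) simp_all
  finally show ?thesis by simp
qed

lemma sum_weighted_differences:
  fixes g :: "nat \<Rightarrow> real"
  shows "(\<Sum>n<M. (4 * real n + 3) * (g n - g (Suc n))) = 4 * (\<Sum>n<M. g n) - g 0 - (4 * real M - 1) * g M"
  by (induction M) (simp_all add: algebra_simps)

lemma expQ_partial_sum_error:
  assumes "0 < t" "t \<le> 1/144"
  shows "\<bar>\<Sum>n<M. expQ1 t l n - expQ2 t l n - F_rat (exp (- t * real l)) * (expQ1 t l n - expQ1 t l (Suc n))\<bar>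
    \<le> 3 * exp 6 * sqrt t"
proof -
  let ?g = "expQ1 t l"
  have g0: "?g 0 = 1" by (simp add: expQ1_def Q1_def)
  have gM: "0 \<le> ?g M" "?g M \<le> 1" using assms by (auto simp: expQ1_def)
  have weighted: "(\<Sum>n<M. (4 * real n + 3) * (?g n - ?g (Suc n))) \<le> 4 * (\<Sum>n<M. ?g n)"
  proof -
    have "0 \<le> real M * ?g M" using gM by simp
    then show ?thesis unfolding sum_weighted_differences g0 left_diff_distrib using gM by linarith
  qed
  have "\<bar>\<Sum>n<M. ?g n - expQ2 t l n - F_rat (exp (- t * real l)) * (?g n - ?g (Suc n))\<bar>
      \<le> (\<Sum>n<M. 3 * t * (4 * real n + 3) * (?g n - ?g (Suc n)) + 3 * t * ?g n)"
    using assms by (intro order.trans[OF sum_abs] sum_mono expQ_diff_approx) auto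
  also have "\<dots> = 3 * t * (\<Sum>n<M. (4 * real n + 3) * (?g n - ?g (Suc n))) + 3 * t * (\<Sum>n<M. ?g n)"
    by (simp add: sum.distrib sum_distrib_left mult.assoc)
  also have "\<dots> \<le> 15 * t * (\<Sum>n<M. ?g n)"
    using weighted assms by (simp add: mult_left_mono)
  also have "\<dots> \<le> 15 * t * (exp 6 / (6 * sqrt t))"
    using assms sum_expQ1_le by (intro mult_left_mono) auto
  also have "\<dots> = 5/2 * exp 6 * (t / sqrt t)" by simp
  also have "\<dots> = 5/2 * exp 6 * sqrt t" using assms by (simp add: real_div_sqrt)
  also have "\<dots> \<le> 3 * exp 6 * sqrt t" using assms by (intro mult_right_mono) auto
  finally show ?thesis .
qed

lemma expQ_sum_approx:
  assumes "0 < t" "t \<le> 1/144"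
  shows "\<bar>(\<Sum>n. expQ1 t l n - expQ2 t l n) - F_rat (exp (- t * real l))\<bar> \<le> 3 * exp 6 * sqrt t"
proof -
  let ?g = "expQ1 t l" and ?x = "exp (- t * real l)"
  have "0 \<le> expQ2 t l n" "expQ2 t l n \<le> ?g n" for n
    using assms by (simp_all add: expQ1_def expQ2_def Q2_def mult_left_mono)
  then have "summable (\<lambda>n. ?g n - expQ2 t l n)"
    by (intro summable_comparison_test[OF _ summable_expQ1[OF assms(1), of l]]) auto
  moreover have "(\<lambda>n. ?g n - ?g (Suc n)) sums 1"
    using telescope_sums'[OF summable_LIMSEQ_zero[OF summable_expQ1[OF assms(1)]]]
    by (simp add: expQ1_def Q1_def)
  ultimately have "(\<lambda>n. ?g n - expQ2 t l n - F_rat ?x * (?g n - ?g (Suc n)))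
      sums ((\<Sum>n. ?g n - expQ2 t l n) - F_rat ?x * 1)"
    by (intro sums_diff summable_sums sums_mult)
  then have "(\<lambda>M. \<bar>\<Sum>n<M. ?g n - expQ2 t l n - F_rat ?x * (?g n - ?g (Suc n))\<bar>)
      \<longlonglongrightarrow> \<bar>(\<Sum>n. ?g n - expQ2 t l n) - F_rat ?x\<bar>"
    unfolding sums_def by (intro tendsto_rabs) simp
  then show ?thesis
    using expQ_partial_sum_error[OF assms] by (intro LIMSEQ_le_const2) auto
qed

lemma B_const_pos: "0 < B_const"
  unfolding B_const_def by simp

lemma B_const_le_4: "B_const \<le> 4"
proof -
  have "2 \<le> sqrt 6" by (rule real_le_rsqrt) simp
  moreover have "2 * pi \<le> 8" using pi_less_4 by simp
  ultimately have "2 * pi / sqrt 6 \<le> 8 / 2" by (intro frac_le) auto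
  then show ?thesis unfolding B_const_def by simp
qed

lemma sqrt_le_powr_neg_tenth:
  fixes x t :: real
  assumes "1 \<le> x" "t \<le> 2 / sqrt x"
  shows "sqrt t \<le> 2 * x powr (-1/10)"
proof -
  have "sqrt x = x powr (1/2)" using assms by (simp add: powr_half_sqrt)
  then have "2 / sqrt x = 2 * x powr (-(1/2))" by (simp only: divide_inverse powr_minus)
  also have "\<dots> \<le> 2 * x powr (-1/5)" using assms by (intro mult_left_mono powr_mono) auto
  also have "x powr (-1/5) = (x powr (-1/10))^2"
    using assms by (simp add: power2_eq_square powr_add[symmetric])
  finally have "sqrt t \<le> sqrt (2 * (x powr (-1/10))^2)" using assms(2) by simp
  also have "\<dots> = sqrt 2 * x powr (-1/10)" by (simp add: real_sqrt_mult)
  also have "\<dots> \<le> 2 * x powr (-1/10)" by (intro mult_right_mono) (auto intro: real_le_lsqrt)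
  finally show ?thesis .
qed

lemma relative_error_of_abs_diff_le:
  fixes S p \<eta> :: real
  assumes "\<bar>S - p\<bar> \<le> \<eta>" "1/2 \<le> p"
  shows "\<exists>E. \<bar>E\<bar> \<le> 2 * \<eta> \<and> S = (1 + E) * p"
proof (intro exI conjI)
  have "\<bar>(S - p) / p\<bar> = \<bar>S - p\<bar> / p" using assms by simp
  also have "\<dots> \<le> \<eta> / (1/2)" using assms by (intro frac_le) auto
  finally show "\<bar>(S - p) / p\<bar> \<le> 2 * \<eta>" by simp
  show "S = (1 + (S - p) / p) * p" using assms by (simp add: field_simps)
qed

lemma I_M_relative_error:
  assumes "82944 \<le> N"
  shows "\<exists>E. \<bar>E\<bar> \<le> 12 * exp 6 * real N powr (-1/10) \<and>
      I_M l N = (1 + E) * F_fun (B_const * real l / (2 * sqrt (real N)))"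
proof -
  have N: "1 \<le> real N" "288 \<le> sqrt (real N)" using assms by (auto intro: real_le_rsqrt)
  define t where "t = B_const / (2 * sqrt (real N))"
  have t: "0 < t" "t \<le> 2 / sqrt (real N)"
    using N B_const_pos divide_right_mono[OF B_const_le_4, of "2 * sqrt (real N)"]
    by (simp_all add: t_def)
  moreover have "2 / sqrt (real N) \<le> 2 / 288" using N by (intro divide_left_mono) auto
  ultimately have "t \<le> 1/144" by simp
  then have "\<bar>I_M l N - F_rat (exp (- t * real l))\<bar> \<le> 3 * exp 6 * sqrt t"
    using expQ_sum_approx[OF t(1)] by (simp add: I_M_def expQ1_def expQ2_def t_def)
  also have "\<dots> \<le> 3 * exp 6 * (2 * real N powr (-1/10))"
    using sqrt_le_powr_neg_tenth[OF N(1) t(2)] by simp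
  finally have close: "\<bar>I_M l N - F_rat (exp (- t * real l))\<bar> \<le> 6 * exp 6 * real N powr (-1/10)"
    by simp
  have "1/2 \<le> F_rat (exp (- t * real l))" using t by (intro F_rat_ge_half) auto
  with close obtain E where "\<bar>E\<bar> \<le> 2 * (6 * exp 6 * real N powr (-1/10))"
      and "I_M l N = (1 + E) * F_rat (exp (- t * real l))"
    by (metis relative_error_of_abs_diff_le)
  moreover have "F_fun (B_const * real l / (2 * sqrt (real N))) = F_rat (exp (- t * real l))"
    by (simp add: F_fun_eq_F_rat t_def)
  ultimately show ?thesis by (intro exI[of _ E]) (simp add: mult.assoc)
qed

theorem mainTheorem8:
  shows "\<exists>C N0. \<forall>N::nat. N \<ge> N0 \<longrightarrow> (\<forall>l::nat.
            real l \<le> sqrt (real N) * (ln (real N))^2 \<longrightarrow>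
            (\<exists>E. \<bar>E\<bar> \<le> C * real N powr (-1/10) \<and>
                 I_M l N = (1 + E) * F_fun (B_const * real l / (2 * sqrt (real N)))))"
  using I_M_relative_error by blast

end
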